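(* Let $m>0$ and let $u:(0,\infty)\to\mathbb{R}$ be the function such that the distribution $x\mapsto\frac{1}{2(2\pi)^3}\int_{\mathbb{R}^3}e^{ik\cdot x}\frac{1}{\sqrt{|k|^2+m^2}}\,\mathrm{d}^3k$ on $\mathbb{R}^3$ coincides with $u(|x|)$ on $x\ne0$ (explicitly, $u(r)=\frac{m}{4\pi^2r}K_1(mr)$ with $K_1$ the modified Bessel function). Let $R>0$. Then for all $r\ge R$ and all $n\in\mathbb{Z}_{\ge0}$, $$|\partial_r^nu(r)|\le C_3C_4^{n+3}\,n!\,e^{-mr},$$ where $C_4=4\max\{m,\frac1R\}$ and $C_3=\frac{2}{25m}$.
   Context: This $u$ describes the equal-time two-point function $\omega^{(0)}_2|_{x^0=x'^0=0}(x,x')=u(|x-x'|)$ of the vacuum state of a free real scalar field of mass $m$ in $3+1$-dimensional Minkowski spacetime. *)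

theory Defs
  imports "HOL-Analysis.Analysis"
begin

definition besselK1 :: "real \<Rightarrow> real" where
  "besselK1 z = (LINT t:{0..}|lborel. exp (- z * cosh t) * cosh t)"

definition two_point_u :: "real \<Rightarrow> real \<Rightarrow> real" where
  "two_point_u m r = m / (4 * pi^2 * r) * besselK1 (m * r)"

end

theory Submission
  imports Defs "HOL-Probability.Sinc_Integral" "HOL-Real_Asymp.Real_Asymp"
begin

(*
  Integrating by parts, K_1(z) = z G_0(z) with the moments (bessel_moment k z)
    G_k(z) = integral over t > 0 of cosh^k t sinh^2 t exp (- z cosh t),
  so u(r) = m^2 / (4 pi^2) G_0(m r). Differentiating under the integral sign gives
  G_k' = - G_(k+1), hence u^(n)(r) = m^2 / (4 pi^2) (-m)^n G_n(m r).
  To bound G_n(z), use sinh t <= cosh t and write cosh t = 1 + v: since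
  1 + v <= max 1 (2/z) (1 + z v / 2) and y^N <= N! e^y,
    cosh^(n+1) t exp (- z cosh t) <= e (n+1)! max 1 (2/z)^(n+1) e^(-z) e^(- z v / 2),
  and the integral of sinh t e^(- z v / 2) over t > 0 is exactly 2/z.
*)

lemma power_le_fact_mult_exp:
  fixes y :: real
  assumes "0 \<le> y"
  shows "y ^ N \<le> fact N * exp y"
proof -
  have "y ^ N / fact N \<le> (\<Sum>n\<le>N. y ^ n / fact n)"
    by (rule member_le_sum) (use assms in auto)
  also have "\<dots> \<le> exp y"
    using assms summable_exp_generic[of y]
    by (auto simp: exp_def divide_inverse ac_simps intro!: sum_le_suminf)
  finally show ?thesis
    by (simp add: field_simps)
qed

lemma one_plus_div_two_le_cosh: "(1 + t) / 2 \<le> cosh (t :: real)"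
proof -
  have "1 + t \<le> exp t + exp (- t)"
    using exp_ge_add_one_self[of t] exp_gt_zero[of "- t"] by linarith
  then show ?thesis
    by (simp add: cosh_def divide_right_mono)
qed

lemma power_mult_exp_le:
  fixes a x :: real
  assumes "0 < a" and "1 \<le> x"
  shows "x ^ N * exp (- a * x)
           \<le> exp 1 * fact N * max 1 (2 / a) ^ N * exp (- a) * exp (- (a / 2) * (x - 1))"
proof -
  define \<mu> where "\<mu> = max 1 (2 / a)"
  have "x \<le> \<mu> * (1 + a / 2 * (x - 1))"
  proof (cases "2 / a \<le> 1")
    case True
    then have "x \<le> 1 + a / 2 * (x - 1)"
      using assms mult_nonneg_nonneg[of "a - 2" "x - 1"] by (simp add: field_simps)
    with True show ?thesis
      using assms by (simp add: \<mu>_def)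
  next
    case False
    then have "x \<le> 2 / a * (1 + a / 2 * (x - 1))"
      using assms by (simp add: field_simps)
    with False show ?thesis
      by (simp add: \<mu>_def)
  qed
  then have "x ^ N \<le> \<mu> ^ N * (1 + a / 2 * (x - 1)) ^ N"
    using assms by (simp add: power_mono flip: power_mult_distrib)
  also have "\<dots> \<le> \<mu> ^ N * (fact N * exp (1 + a / 2 * (x - 1)))"
    using assms by (intro mult_left_mono power_le_fact_mult_exp) (auto simp: \<mu>_def)
  finally have "x ^ N * exp (- a * x) \<le> \<mu> ^ N * (fact N * exp (1 + a / 2 * (x - 1))) * exp (- a * x)"
    by (simp add: mult_right_mono)
  also have "\<dots> = exp 1 * fact N * \<mu> ^ N * exp (- a) * exp (- (a / 2) * (x - 1))"
    by (simp add: algebra_simps flip: exp_add)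
  finally show ?thesis
    by (simp add: \<mu>_def)
qed

lemma fact_Suc_le_two_power_mult_fact: "fact (Suc n) \<le> (2::real) ^ Suc n * fact n"
proof -
  have "real (Suc n) \<le> 2 ^ Suc n"
    using less_exp[of "Suc n"] by (metis less_imp_le of_nat_le_iff of_nat_numeral of_nat_power)
  then show ?thesis
    by (simp add: mult_right_mono)
qed

lemma exp_1_div_two_pi_sq_le_1: "exp 1 / (2 * pi ^ 2) \<le> 1"
proof -
  have "(3::real) ^ 2 \<le> pi ^ 2"
    using pi_gt3 by (intro power_mono) auto
  then show ?thesis
    using exp_le by simp
qed

lemma has_real_derivative_integral:
  fixes f f' :: "real \<Rightarrow> 'a \<Rightarrow> real" and w :: "'a \<Rightarrow> real"
  assumes "0 < \<delta>"
    and integrable: "\<And>s. s \<in> ball x \<delta> \<Longrightarrow> integrable M (f s)"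
    and measurable_deriv: "f' x \<in> borel_measurable M"
    and deriv: "\<And>s t. s \<in> ball x \<delta> \<Longrightarrow> t \<in> space M \<Longrightarrow> ((\<lambda>s. f s t) has_real_derivative f' s t) (at s)"
    and dominated: "integrable M w" "\<And>s t. s \<in> ball x \<delta> \<Longrightarrow> t \<in> space M \<Longrightarrow> \<bar>f' s t\<bar> \<le> w t"
  shows "((\<lambda>s. integral\<^sup>L M (f s)) has_real_derivative integral\<^sup>L M (f' x)) (at x)"
proof -
  define q where "q s t = (f s t - f x t) / (s - x)" for s t
  have lim: "((\<lambda>s. integral\<^sup>L M (q s)) \<longlongrightarrow> integral\<^sup>L M (f' x)) (at x)"
    unfolding tendsto_at_iff_sequentially comp_def
  proof (intro allI impI)
    fix X :: "nat \<Rightarrow> real"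
    assume X: "\<forall>i. X i \<in> UNIV - {x}" "X \<longlonglongrightarrow> x"
    then obtain N where N: "\<And>i. N \<le> i \<Longrightarrow> X i \<in> ball x \<delta>"
      using \<open>0 < \<delta>\<close> by (metis LIMSEQ_iff_nz dist_commute mem_ball)
    have "(\<lambda>i. integral\<^sup>L M (q (X (i + N)))) \<longlonglongrightarrow> integral\<^sup>L M (f' x)"
    proof (rule integral_dominated_convergence[OF measurable_deriv _ dominated(1)])
      show "q (X (i + N)) \<in> borel_measurable M" for i
        using integrable[of "X (i + N)"] integrable[of x] N[of "i + N"] \<open>0 < \<delta>\<close>
        unfolding q_def by (intro borel_measurable_divide borel_measurable_diff) auto
      show "AE t in M. (\<lambda>i. q (X (i + N)) t) \<longlonglongrightarrow> f' x t"
      proof (rule AE_I2)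
        fix t
        assume "t \<in> space M"
        with deriv[of x t] \<open>0 < \<delta>\<close> have "((\<lambda>s. q s t) \<longlongrightarrow> f' x t) (at x)"
          by (simp add: q_def has_field_derivative_iff)
        then show "(\<lambda>i. q (X (i + N)) t) \<longlonglongrightarrow> f' x t"
          using X by (auto simp: tendsto_at_iff_sequentially comp_def intro: LIMSEQ_ignore_initial_segment)
      qed
      show "AE t in M. norm (q (X (i + N)) t) \<le> w t" for i
      proof (rule AE_I2)
        fix t
        assume t: "t \<in> space M"
        have "norm (f (X (i + N)) t - f x t) \<le> w t * norm (X (i + N) - x)"
        proof (rule field_differentiable_bound[where S = "ball x \<delta>" and f' = "\<lambda>s. f' s t"])
          show "((\<lambda>s. f s t) has_field_derivative f' s t) (at s within ball x \<delta>)"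
            if "s \<in> ball x \<delta>" for s
            using deriv[OF that t] by (rule has_field_derivative_at_within)
          show "norm (f' s t) \<le> w t" if "s \<in> ball x \<delta>" for s
            using dominated(2)[OF that t] by simp
        qed (use N[of "i + N"] \<open>0 < \<delta>\<close> in auto)
        then show "norm (q (X (i + N)) t) \<le> w t"
          using X(1) by (simp add: q_def divide_le_eq)
      qed
    qed
    then show "(\<lambda>i. integral\<^sup>L M (q (X i))) \<longlonglongrightarrow> integral\<^sup>L M (f' x)"
      by (rule LIMSEQ_offset)
  qed
  have quotient: "integral\<^sup>L M (q s) = (integral\<^sup>L M (f s) - integral\<^sup>L M (f x)) / (s - x)"
    if "s \<in> ball x \<delta>" for s
    using integrable[OF that] integrable[of x] \<open>0 < \<delta>\<close> unfolding q_def by simp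
  show ?thesis
    unfolding has_field_derivative_iff
    by (rule Lim_transform_within_open[OF lim open_ball]) (use \<open>0 < \<delta>\<close> quotient in auto)
qed

lemma cosh_measurable [measurable]: "(cosh :: real \<Rightarrow> real) \<in> borel_measurable borel"
  by (intro borel_measurable_continuous_onI continuous_intros)

lemma sinh_measurable [measurable]: "(sinh :: real \<Rightarrow> real) \<in> borel_measurable borel"
  by (intro borel_measurable_continuous_onI continuous_intros)

lemma set_integrable_cosh_sinh_power_exp:
  fixes b :: real
  assumes "0 < b"
  shows "set_integrable lborel {0<..} (\<lambda>t. cosh t ^ j * sinh t ^ i * exp (- b * cosh t))"
proof (rule set_integrable_bound)
  define N where "N = j + i"
  define C where "C = exp 1 * fact N * max 1 (2 / b) ^ N * exp (- b) * exp (b / 4)"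
  show "set_integrable lborel {0<..} (\<lambda>t. C * exp (- (t * (b / 4))))"
    using integrable_I0i_exp_mscale[of "b / 4"] assms by simp
  show "AE t in lborel. t \<in> {0<..} \<longrightarrow>
          norm (cosh t ^ j * sinh t ^ i * exp (- b * cosh t)) \<le> norm (C * exp (- (t * (b / 4))))"
  proof (intro AE_I2 impI)
    fix t :: real
    assume "t \<in> {0<..}"
    then have sinh_nonneg: "0 \<le> sinh t"
      by simp
    have "cosh t ^ j * sinh t ^ i * exp (- b * cosh t) \<le> cosh t ^ N * exp (- b * cosh t)"
      using sinh_nonneg sinh_le_cosh_real[of t]
      by (auto simp: N_def power_add intro!: mult_right_mono mult_left_mono power_mono)
    also have "\<dots> \<le> exp 1 * fact N * max 1 (2 / b) ^ N * exp (- b) * exp (- (b / 2) * (cosh t - 1))"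
      using assms by (intro power_mult_exp_le cosh_real_ge_1)
    also have "exp (- (b / 2) * (cosh t - 1)) \<le> exp (b / 4) * exp (- (t * (b / 4)))"
    proof -
      have "- (b / 2) * (cosh t - 1) - (b / 4 - t * (b / 4)) = b / 4 * ((1 + t) - 2 * cosh t)"
        by (simp add: field_simps)
      also have "\<dots> \<le> 0"
        using one_plus_div_two_le_cosh[of t] assms by (intro mult_nonneg_nonpos) auto
      finally show ?thesis
        by (simp flip: exp_add)
    qed
    finally show "norm (cosh t ^ j * sinh t ^ i * exp (- b * cosh t)) \<le> norm (C * exp (- (t * (b / 4))))"
      using sinh_nonneg by (simp add: C_def mult_ac)
  qed
qed (simp_all add: set_borel_measurable_def)

lemma sinh_exp_cosh_integral:
  fixes b :: real
  assumes "0 < b"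
  shows "set_integrable lborel {0<..} (\<lambda>t. sinh t * exp (- b * (cosh t - 1)))"
    and "(LINT t:{0<..}|lborel. sinh t * exp (- b * (cosh t - 1))) = 1 / b"
proof -
  define F where "F t = - exp (- b * (cosh t - 1)) / b" for t :: real
  have derivative: "(F has_real_derivative sinh t * exp (- b * (cosh t - 1))) (at t)" for t
    unfolding F_def using assms by (auto intro!: derivative_eq_intros)
  have at_0: "((F \<circ> real_of_ereal) \<longlongrightarrow> - 1 / b) (at_right 0)"
    unfolding zero_ereal_def ereal_tendsto_simps F_def using assms by (auto intro!: tendsto_eq_intros)
  have "(F \<longlongrightarrow> 0) at_top"
    unfolding F_def cosh_field_def using assms by real_asymp
  then have at_infinity: "((F \<circ> real_of_ereal) \<longlongrightarrow> 0) (at_left \<infinity>)"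
    unfolding ereal_tendsto_simps .
  have continuous: "isCont (\<lambda>t. sinh t * exp (- b * (cosh t - 1))) t" for t
    by (intro continuous_intros)
  have nonneg: "AE t in lborel. 0 < ereal t \<longrightarrow> ereal t < \<infinity> \<longrightarrow> 0 \<le> sinh t * exp (- b * (cosh t - 1))"
    by (intro AE_I2) (auto simp: zero_ereal_def)
  note FTC = interval_integral_FTC_nonneg[OF ereal_less(5) derivative continuous nonneg at_0 at_infinity]
  show "set_integrable lborel {0<..} (\<lambda>t. sinh t * exp (- b * (cosh t - 1)))"
    using FTC(1) by (simp add: zero_ereal_def)
  show "(LINT t:{0<..}|lborel. sinh t * exp (- b * (cosh t - 1))) = 1 / b"
    using FTC(2) by (simp add: zero_ereal_def interval_integral_to_infinity_eq)
qed

definition bessel_moment :: "nat \<Rightarrow> real \<Rightarrow> real" where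
  "bessel_moment k z = (LINT t:{0<..}|lborel. cosh t ^ k * sinh t ^ 2 * exp (- z * cosh t))"

lemma bessel_moment_has_real_derivative:
  assumes "0 < z"
  shows "(bessel_moment k has_real_derivative - bessel_moment (Suc k) z) (at z)"
proof -
  define g where "g j s = (\<lambda>t. indicator {0<..} t * (cosh t ^ j * sinh t ^ 2 * exp (- s * cosh t)))"
    for j :: nat and s :: real
  have integrable: "integrable lborel (g j s)" if "0 < s" for j s
    using set_integrable_cosh_sinh_power_exp[OF that, of j 2]
    by (simp add: g_def set_integrable_def)
  have moment: "bessel_moment j = (\<lambda>s. integral\<^sup>L lborel (g j s))" for j
    by (simp add: fun_eq_iff bessel_moment_def set_lebesgue_integral_def g_def)
  have near_z: "z / 2 < s" if "s \<in> ball z (z / 2)" for s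
    using that unfolding mem_ball dist_real_def by arith
  have "((\<lambda>s. integral\<^sup>L lborel (g k s)) has_real_derivative integral\<^sup>L lborel (\<lambda>t. - g (Suc k) z t)) (at z)"
  proof (rule has_real_derivative_integral[where \<delta> = "z / 2" and w = "g (Suc k) (z / 2)"])
    show "integrable lborel (g k s)" if "s \<in> ball z (z / 2)" for s
      using near_z[OF that] assms by (intro integrable) simp
    show "((\<lambda>s. g k s t) has_real_derivative - g (Suc k) s t) (at s)" for s t
      unfolding g_def by (auto intro!: derivative_eq_intros simp: algebra_simps)
    show "\<bar>- g (Suc k) s t\<bar> \<le> g (Suc k) (z / 2) t" if "s \<in> ball z (z / 2)" for s t
      using near_z[OF that] by (auto simp: g_def indicator_def intro!: mult_left_mono)
    show "integrable lborel (g (Suc k) (z / 2))"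
      using assms by (intro integrable) simp
  qed (use assms in \<open>simp_all add: g_def\<close>)
  then show ?thesis
    by (simp add: moment)
qed

lemma besselK1_eq_bessel_moment:
  assumes "0 < z"
  shows "besselK1 z = z * bessel_moment 0 z"
proof -
  define F where "F t = sinh t * exp (- z * cosh t)" for t :: real
  define f where "f t = cosh t * exp (- z * cosh t) - z * (sinh t ^ 2 * exp (- z * cosh t))"
    for t :: real
  have cosh_integrable: "set_integrable lborel {0<..} (\<lambda>t. cosh t * exp (- z * cosh t))"
    using set_integrable_cosh_sinh_power_exp[OF assms, of 1 0] by simp
  have sinh_integrable: "set_integrable lborel {0<..} (\<lambda>t. sinh t ^ 2 * exp (- z * cosh t))"
    using set_integrable_cosh_sinh_power_exp[OF assms, of 0 2] by simp
  have "(LBINT t=0..\<infinity>. f t) = 0 - 0"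
  proof (rule interval_integral_FTC_integrable[where F = F])
    show "(F has_vector_derivative f t) (at t)" for t
      unfolding F_def f_def has_real_derivative_iff_has_vector_derivative[symmetric]
      by (auto intro!: derivative_eq_intros simp: power2_eq_square)
    show "isCont f t" for t
      unfolding f_def by (intro continuous_intros)
    show "((F \<circ> real_of_ereal) \<longlongrightarrow> 0) (at_right 0)"
      unfolding zero_ereal_def ereal_tendsto_simps F_def by (auto intro!: tendsto_eq_intros)
    have "(F \<longlongrightarrow> 0) at_top"
      unfolding F_def sinh_field_def cosh_field_def using assms by real_asymp
    then show "((F \<circ> real_of_ereal) \<longlongrightarrow> 0) (at_left \<infinity>)"
      unfolding ereal_tendsto_simps .
    show "set_integrable lborel (einterval 0 \<infinity>) f"
      unfolding f_def zero_ereal_def einterval_eq_Ici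
      using cosh_integrable sinh_integrable by (intro set_integral_diff(1) set_integrable_mult_right)
  qed auto
  then have "(LINT t:{0<..}|lborel. cosh t * exp (- z * cosh t)) = z * bessel_moment 0 z"
    using cosh_integrable sinh_integrable
    by (simp add: f_def zero_ereal_def interval_integral_to_infinity_eq bessel_moment_def)
  moreover have "besselK1 z = (LINT t:{0<..}|lborel. cosh t * exp (- z * cosh t))"
    unfolding besselK1_def
    by (subst set_integral_discrete_difference[where X = "{0}"]) (auto simp: mult.commute)
  ultimately show ?thesis
    by simp
qed

lemma bessel_moment_nonneg:
  "0 \<le> bessel_moment n z"
  unfolding bessel_moment_def set_lebesgue_integral_def
  by (intro Bochner_Integration.integral_nonneg) (auto simp: indicator_def)

lemma bessel_moment_le:
  assumes "0 < z"
  shows "bessel_moment n z \<le> exp 1 * fact (Suc n) * max 1 (2 / z) ^ Suc n * exp (- z) * (2 / z)"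
proof -
  define C where "C = exp 1 * fact (Suc n) * max 1 (2 / z) ^ Suc n * exp (- z)"
  have "bessel_moment n z \<le> (LINT t:{0<..}|lborel. C * (sinh t * exp (- (z / 2) * (cosh t - 1))))"
    unfolding bessel_moment_def
  proof (rule set_integral_mono)
    show "set_integrable lborel {0<..} (\<lambda>t. cosh t ^ n * sinh t ^ 2 * exp (- z * cosh t))"
      using set_integrable_cosh_sinh_power_exp[OF assms] .
    show "set_integrable lborel {0<..} (\<lambda>t. C * (sinh t * exp (- (z / 2) * (cosh t - 1))))"
      using sinh_exp_cosh_integral(1)[of "z / 2"] assms by simp
    fix t :: real
    assume "t \<in> {0<..}"
    then have sinh_nonneg: "0 \<le> sinh t"
      by simp
    have "cosh t ^ n * sinh t ^ 2 * exp (- z * cosh t) \<le> sinh t * (cosh t ^ Suc n * exp (- z * cosh t))"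
      using sinh_nonneg sinh_le_cosh_real[of t]
      by (simp add: power2_eq_square mult_ac mult_left_mono mult_right_mono)
    also have "\<dots> \<le> sinh t * (C * exp (- (z / 2) * (cosh t - 1)))"
      unfolding C_def using assms sinh_nonneg by (intro mult_left_mono power_mult_exp_le cosh_real_ge_1)
    finally show "cosh t ^ n * sinh t ^ 2 * exp (- z * cosh t) \<le> C * (sinh t * exp (- (z / 2) * (cosh t - 1)))"
      by (simp add: mult_ac)
  qed
  also have "\<dots> = C * (2 / z)"
    using sinh_exp_cosh_integral(2)[of "z / 2"] assms by simp
  finally show ?thesis
    by (simp add: C_def)
qed

lemma two_point_u_eq_bessel_moment:
  assumes "0 < m" and "0 < r"
  shows "two_point_u m r = m ^ 2 / (4 * pi ^ 2) * bessel_moment 0 (m * r)"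
  using assms by (simp add: two_point_u_def besselK1_eq_bessel_moment power2_eq_square)

lemma deriv_two_point_u:
  assumes "0 < m" and "0 < r"
  shows "(deriv ^^ n) (two_point_u m) r = m ^ 2 / (4 * pi ^ 2) * (- m) ^ n * bessel_moment n (m * r)"
  using assms(2)
proof (induction n arbitrary: r)
  case 0
  then show ?case
    using assms(1) by (simp add: two_point_u_eq_bessel_moment)
next
  case (Suc n)
  define c where "c = m ^ 2 / (4 * pi ^ 2) * (- m) ^ n"
  have "((\<lambda>s. bessel_moment n (m * s)) has_real_derivative - bessel_moment (Suc n) (m * r) * m) (at r)"
    using assms(1) Suc.prems
    by (intro DERIV_chain2[OF bessel_moment_has_real_derivative]) (auto intro!: derivative_eq_intros)
  then have "((\<lambda>s. c * bessel_moment n (m * s)) has_real_derivative c * (- bessel_moment (Suc n) (m * r) * m)) (at r)"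
    by (rule DERIV_cmult)
  then have "((deriv ^^ n) (two_point_u m) has_real_derivative c * (- bessel_moment (Suc n) (m * r) * m)) (at r)"
    by (rule has_field_derivative_transform_within_open[where S = "{0<..}"])
       (use Suc in \<open>auto simp: c_def\<close>)
  then show ?case
    by (simp add: DERIV_imp_deriv c_def)
qed

lemma two_point_constant_le:
  fixes m R r :: real
  assumes "0 < m" and "0 < R" and "R \<le> r"
  shows "m ^ 2 / (4 * pi ^ 2) * m ^ n * (exp 1 * fact (Suc n) * max 1 (2 / (m * r)) ^ Suc n * (2 / (m * r)))
           \<le> 2 / (25 * m) * (4 * max m (1 / R)) ^ (n + 3) * fact n"
proof -
  define M where "M = max m (1 / R)"
  have "0 < r" and "0 < M"
    using assms by (simp_all add: M_def less_max_iff_disj)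
  have "1 / r \<le> M"
    using assms by (simp add: M_def le_max_iff_disj frac_le)
  have "m * max 1 (2 / (m * r)) = max m (2 / r)"
    using assms \<open>0 < r\<close> by (simp add: max_def field_simps)
  also have "\<dots> \<le> 2 * M"
    using \<open>1 / r \<le> M\<close> assms(1) by (simp add: M_def)
  finally have "(m * max 1 (2 / (m * r))) ^ Suc n \<le> (2 * M) ^ Suc n"
    using assms \<open>0 < r\<close> by (intro power_mono) auto
  have "m ^ 2 / (4 * pi ^ 2) * m ^ n * (exp 1 * fact (Suc n) * max 1 (2 / (m * r)) ^ Suc n * (2 / (m * r)))
      = exp 1 / (2 * pi ^ 2) * fact (Suc n) * (m * max 1 (2 / (m * r))) ^ Suc n * (1 / r)"
    using assms \<open>0 < r\<close> by (simp add: field_simps power_mult_distrib power2_eq_square)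
  also have "\<dots> \<le> 1 * (2 ^ Suc n * fact n) * (2 * M) ^ Suc n * M"
    using assms \<open>0 < r\<close> \<open>0 < M\<close>
    by (intro \<open>(m * max 1 (2 / (m * r))) ^ Suc n \<le> (2 * M) ^ Suc n\<close> \<open>1 / r \<le> M\<close>
        exp_1_div_two_pi_sq_le_1 fact_Suc_le_two_power_mult_fact mult_mono) auto
  also have "\<dots> = 4 ^ Suc n * M ^ (n + 2) * fact n"
  proof -
    have "(4::real) ^ Suc n = 2 ^ Suc n * 2 ^ Suc n"
      by (simp flip: power_mult_distrib)
    then show ?thesis
      by (simp add: power_mult_distrib)
  qed
  also have "\<dots> \<le> (32 / 25 * (M / m)) * (4 ^ Suc n * M ^ (n + 2) * fact n)"
  proof -
    have "1 \<le> M / m"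
      using assms by (simp add: M_def)
    moreover have "0 \<le> 4 ^ Suc n * M ^ (n + 2) * (fact n :: real)"
      using \<open>0 < M\<close> by simp
    ultimately show ?thesis
      by (intro mult_le_cancel_right1[THEN iffD2] conjI impI) linarith+
  qed
  also have "\<dots> = 2 / (25 * m) * (16 * M * (4 ^ Suc n * M ^ (n + 2))) * fact n"
    using assms by (simp add: field_simps)
  also have "16 * M * (4 ^ Suc n * M ^ (n + 2)) = (4 * M) ^ (n + 3)"
    by (simp add: power_mult_distrib power_add numeral_eq_Suc)
  finally show ?thesis
    unfolding M_def .
qed

theorem mainTheorem10:
  fixes m R r :: real and n :: nat
  assumes "m > 0" and "R > 0" and "r \<ge> R"
  shows "\<bar>(deriv ^^ n) (two_point_u m) r\<bar>
           \<le> (2 / (25 * m)) * (4 * max m (1 / R)) ^ (n + 3) * fact n * exp (- m * r)"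
proof -
  have "0 < r" and "0 < m * r"
    using assms by simp_all
  have "\<bar>(deriv ^^ n) (two_point_u m) r\<bar> = m ^ 2 / (4 * pi ^ 2) * m ^ n * bessel_moment n (m * r)"
    using assms \<open>0 < r\<close> bessel_moment_nonneg[of n "m * r"]
    by (simp add: deriv_two_point_u abs_mult power_abs)
  also have "\<dots> \<le> m ^ 2 / (4 * pi ^ 2) * m ^ n *
      (exp 1 * fact (Suc n) * max 1 (2 / (m * r)) ^ Suc n * exp (- (m * r)) * (2 / (m * r)))"
    using assms \<open>0 < m * r\<close> by (intro mult_left_mono bessel_moment_le) auto
  also have "\<dots> = m ^ 2 / (4 * pi ^ 2) * m ^ n *
      (exp 1 * fact (Suc n) * max 1 (2 / (m * r)) ^ Suc n * (2 / (m * r))) * exp (- m * r)"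
    by (simp add: mult_ac)
  also have "\<dots> \<le> (2 / (25 * m)) * (4 * max m (1 / R)) ^ (n + 3) * fact n * exp (- m * r)"
    using assms by (intro mult_right_mono two_point_constant_le) auto
  finally show ?thesis .
qed

end
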